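(* Fix $\theta_{01}\in\mathbb{R}$ and positive integers $J,L$. A structural parameter consists of $\sigma_{U^*}^2\ge0$; for $j=1,\dots,J$: weights $p_{V^*,j}>0$ with $\sum_j p_{V^*,j}=1$, means $\mu_{V^*,j}$ with $\sum_j p_{V^*,j}\mu_{V^*,j}=0$, and $\sigma_{V^*,j}^2\ge0$, $\sigma_{U^*V^*,j}$ with $\sigma_{U^*V^*,j}^2\le\sigma_{U^*}^2\sigma_{V^*,j}^2$; for $\ell=1,\dots,L$: weights $p_{\varepsilon,\ell}>0$ with $\sum_\ell p_{\varepsilon,\ell}=1$, means $\mu_{\varepsilon,\ell}$ with $\sum_\ell p_{\varepsilon,\ell}\mu_{\varepsilon,\ell}=0$, and $\sigma_{\varepsilon,\ell}^2\ge 0$. Such a parameter induces the distribution of $(U,V)$ equal to the mixture, with weights $p_{V^*,j}p_{\varepsilon,\ell}$, of bivariate normals with means $(-\theta_{01}\mu_{\varepsilon,\ell},\ \mu_{V^*,j}+\mu_{\varepsilon,\ell})'$ and covariance matrices $\Sigma_{UV,j\ell}$ with entries $$\sigma_{U,j\ell}^2=\sigma_{U^*}^2+\theta_{01}^2\sigma_{\varepsilon,\ell}^2,\quad \sigma_{V,j\ell}^2=\sigma_{V^*,j}^2+\sigma_{\varepsilon,\ell}^2,\quad \sigma_{UV,j\ell}=\sigma_{U^*V^*,j}-\theta_{01}\sigma_{\varepsilon,\ell}^2 .$$ Fix a true structural parameter whose induced matrices $\Sigma_{UV,j\ell}$ are all positive definite, and for each $(j,\ell)$ let $\mathcal{I}_{j\ell}=[\underline{\sigma}_{U^*,j\ell}^2,\sigma_{U,j\ell}^2]$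 with $$\underline{\sigma}_{U^*,j\ell}^2=\max\left\{\frac{(\theta_{01}\sigma_{UV,j\ell}+\sigma_{U,j\ell}^2)^2}{\sigma_{V,j\ell}^2\theta_{01}^2+2\sigma_{UV,j\ell}\theta_{01}+\sigma_{U,j\ell}^2},\ \sigma_{U,j\ell}^2-\theta_{01}^2\sigma_{V,j\ell}^2\right\},$$ and $\mathcal{I}=\bigcap_{j,\ell}\mathcal{I}_{j\ell}=[\max_{j,\ell}\underline{\sigma}_{U^*,j\ell}^2,\ \min_{j,\ell}\sigma_{U,j\ell}^2]$. Then $\mathcal{I}$ is the sharp identified set for $\sigma_{U^*}^2$: (i) the value of $\sigma_{U^*}^2$ in any structural parameter (with any numbers of components) inducing the same distribution of $(U,V)$ as the true one lies in $\mathcal{I}$; and (ii) for every $\sigma_{U^*}^2\in\mathcal{I}$ there exists a structural parameter with this value of $\sigma_{U^*}^2$ (and the same $J$, $L$, weights and means as the true one) that induces the same distribution of $(U,V)$ as the true structural parameter. *)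

theory Defs
  imports "HOL-Probability.Probability"
begin

text \<open>Structural parameter. Components j = 1..J are represented by indices 0..J-1,
  components l = 1..L by indices 0..L-1; values at other indices are irrelevant.\<close>
record sparam =
  sU2  :: real
  pV   :: "nat \<Rightarrow> real"
  muV  :: "nat \<Rightarrow> real"
  sV2  :: "nat \<Rightarrow> real"
  sUV  :: "nat \<Rightarrow> real"
  pe   :: "nat \<Rightarrow> real"
  mue  :: "nat \<Rightarrow> real"
  se2  :: "nat \<Rightarrow> real"

definition valid_param :: "nat \<Rightarrow> nat \<Rightarrow> sparam \<Rightarrow> bool" where
  "valid_param J L P \<longleftrightarrow> 0 < J \<and> 0 < L \<and> sU2 P \<ge> 0 \<and>
     (\<forall>j<J. pV P j > 0 \<and> sV2 P j \<ge> 0 \<and> (sUV P j)\<^sup>2 \<le> sU2 P * sV2 P j) \<and>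
     (\<Sum>j<J. pV P j) = 1 \<and> (\<Sum>j<J. pV P j * muV P j) = 0 \<and>
     (\<forall>l<L. pe P l > 0 \<and> se2 P l \<ge> 0) \<and>
     (\<Sum>l<L. pe P l) = 1 \<and> (\<Sum>l<L. pe P l * mue P l) = 0"

definition sigU2 :: "real \<Rightarrow> sparam \<Rightarrow> nat \<Rightarrow> nat \<Rightarrow> real" where
  "sigU2 \<theta> P j l = sU2 P + \<theta>\<^sup>2 * se2 P l"
definition sigV2 :: "real \<Rightarrow> sparam \<Rightarrow> nat \<Rightarrow> nat \<Rightarrow> real" where
  "sigV2 \<theta> P j l = sV2 P j + se2 P l"
definition sigUV :: "real \<Rightarrow> sparam \<Rightarrow> nat \<Rightarrow> nat \<Rightarrow> real" where
  "sigUV \<theta> P j l = sUV P j - \<theta> * se2 P l"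

definition pos_def2 :: "real \<Rightarrow> real \<Rightarrow> real \<Rightarrow> bool" where
  "pos_def2 a b c \<longleftrightarrow> (\<forall>x y. (x, y) \<noteq> (0, 0) \<longrightarrow> a * x\<^sup>2 + 2 * b * x * y + c * y\<^sup>2 > 0)"

text \<open>Bivariate normal distribution N((m1,m2), [[s11,s12],[s12,s22]]) for a positive
  semidefinite covariance matrix, realised as the law of m + A Z with Z a pair of
  independent standard normals and A the (lower triangular) Cholesky factor.\<close>
definition std_normal2 :: "(real \<times> real) measure" where
  "std_normal2 = density lborel std_normal_density \<Otimes>\<^sub>M density lborel std_normal_density"

definition bvn :: "real \<Rightarrow> real \<Rightarrow> real \<Rightarrow> real \<Rightarrow> real \<Rightarrow> (real \<times> real) measure" where
  "bvn m1 m2 s11 s12 s22 =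
     (let a = sqrt s11; b = (if a = 0 then 0 else s12 / a); c = sqrt (s22 - b\<^sup>2)
      in distr std_normal2 borel (\<lambda>(z1, z2). (m1 + a * z1, m2 + b * z1 + c * z2)))"

definition induced_prob :: "real \<Rightarrow> nat \<Rightarrow> nat \<Rightarrow> sparam \<Rightarrow> (real \<times> real) set \<Rightarrow> real" where
  "induced_prob \<theta> J L P A =
     (\<Sum>j<J. \<Sum>l<L. pV P j * pe P l *
        measure (bvn (- \<theta> * mue P l) (muV P j + mue P l)
                     (sigU2 \<theta> P j l) (sigUV \<theta> P j l) (sigV2 \<theta> P j l)) A)"

definition same_dist :: "real \<Rightarrow> nat \<Rightarrow> nat \<Rightarrow> sparam \<Rightarrow> nat \<Rightarrow> nat \<Rightarrow> sparam \<Rightarrow> bool" where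
  "same_dist \<theta> J L P J' L' P' \<longleftrightarrow>
     (\<forall>A \<in> sets (borel :: (real \<times> real) measure). induced_prob \<theta> J L P A = induced_prob \<theta> J' L' P' A)"

definition lowU :: "real \<Rightarrow> sparam \<Rightarrow> nat \<Rightarrow> nat \<Rightarrow> real" where
  "lowU \<theta> P j l = max
     ((\<theta> * sigUV \<theta> P j l + sigU2 \<theta> P j l)\<^sup>2 /
        (sigV2 \<theta> P j l * \<theta>\<^sup>2 + 2 * sigUV \<theta> P j l * \<theta> + sigU2 \<theta> P j l))
     (sigU2 \<theta> P j l - \<theta>\<^sup>2 * sigV2 \<theta> P j l)"

definition ident_set :: "real \<Rightarrow> nat \<Rightarrow> nat \<Rightarrow> sparam \<Rightarrow> real set" where
  "ident_set \<theta> J L P = (\<Inter>j\<in>{..<J}. \<Inter>l\<in>{..<L}. {lowU \<theta> P j l .. sigU2 \<theta> P j l})"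

end

theory Submission
  imports Defs "HOL-Computational_Algebra.Polynomial"
begin

text \<open>The law of (U, V) is a finite mixture of bivariate normals. Along each line (x, x y)
  its Laplace transform is a finite sum of terms w exp (x m + x^2 q(y) / 2), and such
  exponentials are linearly independent; choosing y so that the variances q(y) of U + y V
  separate the finitely many covariance matrices, every parameter inducing the same law must
  reproduce each true matrix \<Sigma>_UV,jl. Each of these matrices bounds sigma_U*^2: from above
  since sigma_U,jl^2 = sigma_U*^2 + \<theta>^2 sigma_\<epsilon>,l^2, and from below because
  U + \<theta> V = U* + \<theta> V* does not involve \<epsilon>, so Cauchy-Schwarz for (U*, U* + \<theta> V*) and
  sigma_V*,j^2 \<ge> 0 become conditions on \<Sigma>_UV,jl alone. Conversely, moving variance between U*
  and \<epsilon> leaves every \<Sigma>_UV,jl unchanged, and the constraints on the resulting parameter are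
  exactly membership in the interval.\<close>

section \<open>Laplace transform of the bivariate normal law\<close>

lemma prob_space_std_normal2: "prob_space std_normal2"
  unfolding std_normal2_def
  by (intro prob_space_pair prob_space_normal_density) simp_all

lemma sets_std_normal2 [measurable_cong]: "sets std_normal2 = sets (borel :: (real \<times> real) measure)"
proof -
  have "sets std_normal2 = sets ((borel::real measure) \<Otimes>\<^sub>M (borel::real measure))"
    unfolding std_normal2_def by (rule sets_pair_measure_cong) simp_all
  then show ?thesis by (simp only: borel_prod)
qed

lemma measurable_affine_map:
  "(\<lambda>(z1::real, z2::real). (m1 + a * z1, m2 + b * z1 + c * z2)) \<in> std_normal2 \<rightarrow>\<^sub>M borel"
  unfolding measurable_cong_sets[OF sets_std_normal2 refl] case_prod_unfold
  by (intro borel_measurable_continuous_onI continuous_intros)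

lemma prob_space_bvn: "prob_space (bvn m1 m2 s11 s12 s22)"
  unfolding bvn_def Let_def
  by (intro prob_space.prob_space_distr prob_space_std_normal2 measurable_affine_map)

lemma sets_bvn [simp, measurable_cong]: "sets (bvn m1 m2 s11 s12 s22) = sets borel"
  unfolding bvn_def Let_def by simp

lemma nn_integral_exp_std_normal:
  "(\<integral>\<^sup>+z. ennreal (exp (a * z)) \<partial>density lborel std_normal_density) = ennreal (exp (a\<^sup>2 / 2))"
proof -
  have shift: "std_normal_density z * exp (a * z) = normal_density a 1 z * exp (a\<^sup>2 / 2)" for z
  proof -
    have "- z\<^sup>2 / 2 + a * z = - (z - a)\<^sup>2 / 2 + a\<^sup>2 / 2" by (simp add: power2_eq_square field_simps)
    then show ?thesis
      unfolding std_normal_density_def normal_density_def by (simp add: exp_add[symmetric])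
  qed
  have "(\<integral>\<^sup>+z. ennreal (exp (a * z)) \<partial>density lborel std_normal_density)
      = (\<integral>\<^sup>+z. ennreal (normal_density a 1 z) * ennreal (exp (a\<^sup>2 / 2)) \<partial>lborel)"
    by (subst nn_integral_density) (simp_all add: ennreal_mult[symmetric] shift)
  also have "\<dots> = ennreal (exp (a\<^sup>2 / 2))"
    by (subst nn_integral_multc) (simp_all add: nn_integral_eq_integral)
  finally show ?thesis .
qed

lemma nn_integral_exp_std_normal2:
  "(\<integral>\<^sup>+z. ennreal (exp (a * fst z + b * snd z)) \<partial>std_normal2) = ennreal (exp (a\<^sup>2 / 2 + b\<^sup>2 / 2))"
proof -
  let ?N = "density lborel std_normal_density"
  interpret N: prob_space ?N by (intro prob_space_normal_density) simp
  interpret NN: pair_sigma_finite ?N ?N by unfold_locales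
  have "(\<integral>\<^sup>+z. ennreal (exp (a * fst z + b * snd z)) \<partial>std_normal2)
      = (\<integral>\<^sup>+x. \<integral>\<^sup>+y. ennreal (exp (a * x)) * ennreal (exp (b * y)) \<partial>?N \<partial>?N)"
    unfolding std_normal2_def
    by (subst N.nn_integral_fst[symmetric]) (simp_all add: ennreal_mult[symmetric] exp_add)
  also have "\<dots> = ennreal (exp (a\<^sup>2 / 2)) * ennreal (exp (b\<^sup>2 / 2))"
    by (simp add: nn_integral_cmult nn_integral_multc nn_integral_exp_std_normal)
  finally show ?thesis by (simp add: ennreal_mult[symmetric] exp_add)
qed

lemma cholesky_factor:
  fixes s11 s12 s22 :: real
  assumes "0 \<le> s11" "0 \<le> s22" "s12\<^sup>2 \<le> s11 * s22"
  defines "a \<equiv> sqrt s11"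
  defines "b \<equiv> (if a = 0 then 0 else s12 / a)"
  shows "a\<^sup>2 = s11" "a * b = s12" "b\<^sup>2 \<le> s22"
proof -
  show "a\<^sup>2 = s11" using assms(1) by (simp add: a_def)
  show "a * b = s12"
    using assms(1,3) by (cases "a = 0") (simp_all add: a_def b_def)
  show "b\<^sup>2 \<le> s22"
  proof (cases "a = 0")
    case False
    then have "s11 > 0" using assms(1) by (simp add: a_def)
    then show ?thesis
      using False assms(1,3) by (simp add: b_def a_def power_divide divide_le_eq mult.commute)
  qed (use assms(2) in \<open>simp add: b_def\<close>)
qed

lemma nn_integral_exp_bvn:
  assumes "0 \<le> s11" "0 \<le> s22" "s12\<^sup>2 \<le> s11 * s22"
  shows "(\<integral>\<^sup>+z. ennreal (exp (u * fst z + v * snd z)) \<partial>bvn m1 m2 s11 s12 s22)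
       = ennreal (exp (u * m1 + v * m2 + (u\<^sup>2 * s11 + 2 * u * v * s12 + v\<^sup>2 * s22) / 2))"
proof -
  define a where "a = sqrt s11"
  define b where "b = (if a = 0 then 0 else s12 / a)"
  define c where "c = sqrt (s22 - b\<^sup>2)"
  have ab: "a\<^sup>2 = s11" "a * b = s12" "b\<^sup>2 \<le> s22"
    using cholesky_factor[OF assms] unfolding a_def b_def by auto
  have c2: "c\<^sup>2 = s22 - b\<^sup>2" using ab(3) by (simp add: c_def)
  have "(u * a + v * b)\<^sup>2 / 2 + (v * c)\<^sup>2 / 2 = (u\<^sup>2 * a\<^sup>2 + 2 * u * v * (a * b) + v\<^sup>2 * (b\<^sup>2 + c\<^sup>2)) / 2"
    by (simp add: power2_eq_square algebra_simps)
  also have "\<dots> = (u\<^sup>2 * s11 + 2 * u * v * s12 + v\<^sup>2 * s22) / 2"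
    using ab c2 by simp
  finally have exponent: "(u * a + v * b)\<^sup>2 / 2 + (v * c)\<^sup>2 / 2 = \<dots>" .
  have "(\<integral>\<^sup>+z. ennreal (exp (u * fst z + v * snd z)) \<partial>bvn m1 m2 s11 s12 s22)
     = (\<integral>\<^sup>+z. ennreal (exp (u * m1 + v * m2)) *
          ennreal (exp ((u * a + v * b) * fst z + (v * c) * snd z)) \<partial>std_normal2)"
    unfolding bvn_def Let_def a_def[symmetric] b_def[symmetric] c_def[symmetric]
    by (subst nn_integral_distr[OF measurable_affine_map])
       (auto simp: ennreal_mult[symmetric] exp_add[symmetric] algebra_simps split: prod.splits
             intro!: nn_integral_cong borel_measurable_continuous_onI continuous_intros)
  also have "\<dots> = ennreal (exp (u * m1 + v * m2)) * ennreal (exp ((u * a + v * b)\<^sup>2 / 2 + (v * c)\<^sup>2 / 2))"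
    by (subst nn_integral_cmult)
       (simp_all add: nn_integral_exp_std_normal2 measurable_cong_sets[OF sets_std_normal2 refl],
        intro borel_measurable_continuous_onI continuous_intros)
  finally show ?thesis by (simp add: exponent ennreal_mult[symmetric] exp_add[symmetric])
qed

section \<open>Integrals against finite mixtures\<close>

definition mixture_nn_integral ::
    "'i set \<Rightarrow> ('i \<Rightarrow> ennreal) \<Rightarrow> ('i \<Rightarrow> 'a measure) \<Rightarrow> ('a \<Rightarrow> ennreal) \<Rightarrow> ennreal" where
  "mixture_nn_integral I w \<nu> f = (\<Sum>i\<in>I. w i * integral\<^sup>N (\<nu> i) f)"

context
  fixes I :: "'i set" and w :: "'i \<Rightarrow> ennreal" and \<nu> :: "'i \<Rightarrow> 'a measure" and M :: "'a measure"
  assumes sets_component: "\<And>i. i \<in> I \<Longrightarrow> sets (\<nu> i) = sets M"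
begin

lemma measurable_component: "f \<in> borel_measurable M \<Longrightarrow> i \<in> I \<Longrightarrow> f \<in> borel_measurable (\<nu> i)"
  using measurable_cong_sets[OF sets_component refl] by blast

lemma mixture_nn_integral_cong:
  "(\<And>x. x \<in> space M \<Longrightarrow> f x = g x) \<Longrightarrow> mixture_nn_integral I w \<nu> f = mixture_nn_integral I w \<nu> g"
  unfolding mixture_nn_integral_def
  by (intro sum.cong refl arg_cong2[where f = "(*)"] nn_integral_cong)
     (simp add: sets_eq_imp_space_eq[OF sets_component])

lemma mixture_nn_integral_indicator:
  "A \<in> sets M \<Longrightarrow> mixture_nn_integral I w \<nu> (indicator A) = (\<Sum>i\<in>I. w i * emeasure (\<nu> i) A)"
  unfolding mixture_nn_integral_def using sets_component by simp

lemma mixture_nn_integral_cmult: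
  "f \<in> borel_measurable M \<Longrightarrow>
    mixture_nn_integral I w \<nu> (\<lambda>x. c * f x) = c * mixture_nn_integral I w \<nu> f"
  unfolding mixture_nn_integral_def
  by (simp add: measurable_component nn_integral_cmult sum_distrib_left mult.left_commute cong: sum.cong)

lemma mixture_nn_integral_add:
  "f \<in> borel_measurable M \<Longrightarrow> g \<in> borel_measurable M \<Longrightarrow>
    mixture_nn_integral I w \<nu> (\<lambda>x. f x + g x) = mixture_nn_integral I w \<nu> f + mixture_nn_integral I w \<nu> g"
  unfolding mixture_nn_integral_def
  by (simp add: measurable_component nn_integral_add distrib_left sum.distrib cong: sum.cong)

lemma mixture_nn_integral_SUP:
  assumes "finite I" "\<And>n. U n \<in> borel_measurable M" "incseq U"
  shows "mixture_nn_integral I w \<nu> (SUP n. U n) = (SUP n. mixture_nn_integral I w \<nu> (U n))"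
proof -
  have "integral\<^sup>N (\<nu> i) (SUP n. U n) = (SUP n. integral\<^sup>N (\<nu> i) (U n))" if "i \<in> I" for i
    unfolding SUP_apply[abs_def]
    using assms(2,3) that by (intro nn_integral_monotone_convergence_SUP) (auto simp: measurable_component)
  then have "mixture_nn_integral I w \<nu> (SUP n. U n) = (\<Sum>i\<in>I. SUP n. w i * integral\<^sup>N (\<nu> i) (U n))"
    unfolding mixture_nn_integral_def by (intro sum.cong refl) (simp add: SUP_mult_left_ennreal)
  also have "\<dots> = (SUP n. mixture_nn_integral I w \<nu> (U n))"
    unfolding mixture_nn_integral_def
  proof (rule ennreal_SUP_sum[symmetric])
    show "incseq (\<lambda>n. w i * integral\<^sup>N (\<nu> i) (U n))" for i
      using assms(3) unfolding incseq_def le_fun_def by (auto intro!: mult_left_mono nn_integral_mono)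
  qed
  finally show ?thesis .
qed

end

lemma mixture_nn_integral_eq:
  assumes "finite I" "finite I'"
    and "\<And>i. i \<in> I \<Longrightarrow> sets (\<nu> i) = sets M" "\<And>i. i \<in> I' \<Longrightarrow> sets (\<mu> i) = sets M"
    and "\<And>A. A \<in> sets M \<Longrightarrow> (\<Sum>i\<in>I. w i * emeasure (\<nu> i) A) = (\<Sum>i\<in>I'. w' i * emeasure (\<mu> i) A)"
    and "f \<in> borel_measurable M"
  shows "mixture_nn_integral I w \<nu> f = mixture_nn_integral I' w' \<mu> f"
  using assms(6)
proof (induction rule: borel_measurable_induct)
  case (cong f g)
  then show ?case
    using mixture_nn_integral_cong[where I = I and \<nu> = \<nu> and w = w, OF assms(3) cong.hyps(3)]
      mixture_nn_integral_cong[where I = I' and \<nu> = \<mu> and w = w', OF assms(4) cong.hyps(3)]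
    by simp
next
  case (set A)
  then show ?case
    using assms(5) by (simp add: mixture_nn_integral_indicator[OF assms(3)] mixture_nn_integral_indicator[OF assms(4)])
next
  case (mult u c)
  then show ?case
    by (simp add: mixture_nn_integral_cmult[OF assms(3)] mixture_nn_integral_cmult[OF assms(4)])
next
  case (add u v)
  then show ?case
    by (simp add: mixture_nn_integral_add[OF assms(3)] mixture_nn_integral_add[OF assms(4)])
next
  case (seq U)
  then show ?case
    using mixture_nn_integral_SUP[where I = I and \<nu> = \<nu> and w = w, OF assms(3,1) seq.hyps(1,3)]
      mixture_nn_integral_SUP[where I = I' and \<nu> = \<mu> and w = w', OF assms(4,2) seq.hyps(1,3)]
    unfolding SUP_apply[abs_def] by simp
qed

section \<open>Linear independence of Gaussian exponentials\<close>

lemma quadratic_filterlim_at_bot: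
  fixes a b :: real
  assumes "b < 0 \<or> (b = 0 \<and> a < 0)"
  shows "filterlim (\<lambda>x. x * a + x\<^sup>2 * b) at_bot at_top"
proof (cases "b < 0")
  case True
  have "((\<lambda>x. b + a / x) \<longlongrightarrow> b + 0) at_top"
    by (intro tendsto_intros tendsto_divide_0[OF tendsto_const] filterlim_at_top_imp_at_infinity filterlim_ident)
  moreover have "filterlim (\<lambda>x::real. x\<^sup>2) at_top at_top"
    by (intro filterlim_pow_at_top filterlim_ident) simp
  ultimately have "filterlim (\<lambda>x. (b + a / x) * x\<^sup>2) at_bot at_top"
    using True by (intro filterlim_tendsto_neg_mult_at_bot) simp_all
  moreover have "eventually (\<lambda>x. (b + a / x) * x\<^sup>2 = x * a + x\<^sup>2 * b) at_top"
    using eventually_gt_at_top[of 0] by eventually_elim (simp add: power2_eq_square field_simps)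
  ultimately show ?thesis using filterlim_cong by fastforce
next
  case False
  then have "b = 0" "a < 0" using assms by auto
  then show ?thesis
    using filterlim_tendsto_neg_mult_at_bot[OF tendsto_const \<open>a < 0\<close> filterlim_ident]
    by (simp add: mult.commute)
qed

lemma ex_lex_max:
  fixes S :: "(real \<times> real) set"
  assumes "finite S" "S \<noteq> {}"
  obtains p where "p \<in> S" "\<And>q. q \<in> S - {p} \<Longrightarrow> fst q < fst p \<or> (fst q = fst p \<and> snd q < snd p)"
proof -
  define T where "T = {q \<in> S. fst q = Max (fst ` S)}"
  have "Max (fst ` S) \<in> fst ` S" using assms by simp
  then have T: "finite T" "T \<noteq> {}" using assms(1) unfolding T_def by auto
  define p where "p = (Max (fst ` S), Max (snd ` T))"
  have "Max (snd ` T) \<in> snd ` T" using T by simp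
  then have "p \<in> T" unfolding p_def T_def by force
  moreover have "fst q < fst p \<or> (fst q = fst p \<and> snd q < snd p)" if "q \<in> S - {p}" for q
  proof -
    have "fst q \<le> fst p" using that assms(1) by (simp add: p_def)
    moreover have "snd q < snd p" if "fst q = fst p"
    proof -
      have "q \<in> T" using \<open>q \<in> S - {p}\<close> that unfolding T_def p_def by simp
      then have "snd q \<le> snd p" using T(1) by (simp add: p_def)
      moreover have "snd q \<noteq> snd p" using \<open>q \<in> S - {p}\<close> that by (cases q, cases p) auto
      ultimately show ?thesis by simp
    qed
    ultimately show ?thesis by fastforce
  qed
  ultimately show ?thesis using that[of p] unfolding T_def by blast
qed

text \<open>The lexicographically largest pair (b, a) dominates as x \<rightarrow> \<infinity>.\<close>
lemma exp_quadratic_linear_independent: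
  fixes S :: "(real \<times> real) set"
  assumes "finite S" "\<And>x. (\<Sum>q\<in>S. c q * exp (x * snd q + x\<^sup>2 * fst q)) = 0"
  shows "\<forall>q\<in>S. c q = 0"
  using assms
proof (induction rule: finite_remove_induct)
  case (remove S)
  obtain p where p: "p \<in> S" "\<And>q. q \<in> S - {p} \<Longrightarrow> fst q < fst p \<or> (fst q = fst p \<and> snd q < snd p)"
    using ex_lex_max[OF remove.hyps(1,2)] by blast
  define g where "g x = (\<Sum>q\<in>S - {p}. c q * exp (x * (snd q - snd p) + x\<^sup>2 * (fst q - fst p)))" for x
  have factor: "(\<Sum>q\<in>S. c q * exp (x * snd q + x\<^sup>2 * fst q))
      = exp (x * snd p + x\<^sup>2 * fst p) * (c p + g x)" for x
    unfolding g_def distrib_left sum_distrib_left sum.remove[OF remove.hyps(1) p(1)]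
    by (auto simp: exp_add[symmetric] algebra_simps intro!: sum.cong)
  then have "c p + g x = 0" for x
    using remove.prems by simp
  then have "g = (\<lambda>x. - c p)"
    by (simp add: fun_eq_iff eq_neg_iff_add_eq_0 add.commute)
  moreover have "(g \<longlongrightarrow> 0) at_top"
    unfolding g_def
    by (intro tendsto_null_sum tendsto_mult_right_zero filterlim_compose[OF exp_at_bot]
          quadratic_filterlim_at_bot) (use p(2) in force)
  ultimately have "c p = 0" by (simp add: tendsto_const_iff)
  moreover have "\<forall>q\<in>S - {p}. c q = 0"
  proof (rule remove.IH[OF p(1)])
    show "(\<Sum>q\<in>S - {p}. c q * exp (x * snd q + x\<^sup>2 * fst q)) = 0" for x
      using remove.prems[of x] \<open>c p = 0\<close> by (simp add: sum.remove[OF remove.hyps(1) p(1)])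
  qed
  ultimately show ?case by blast
qed simp

lemma sum_exp_quadratic_group:
  fixes K :: "'k set" and S :: "(real \<times> real) set" and w a b :: "'k \<Rightarrow> real"
  assumes "finite K" "finite S" "(\<lambda>k. (b k, a k)) ` K \<subseteq> S"
  shows "(\<Sum>k\<in>K. w k * exp (x * a k + x\<^sup>2 * b k))
       = (\<Sum>q\<in>S. (\<Sum>k\<in>{k\<in>K. (b k, a k) = q}. w k) * exp (x * snd q + x\<^sup>2 * fst q))"
proof -
  have "(\<Sum>k\<in>K. w k * exp (x * a k + x\<^sup>2 * b k))
      = (\<Sum>q\<in>S. \<Sum>k\<in>{k\<in>K. (b k, a k) = q}. w k * exp (x * a k + x\<^sup>2 * b k))"
    by (rule sum.group[OF assms, symmetric])
  also have "\<dots> = (\<Sum>q\<in>S. (\<Sum>k\<in>{k\<in>K. (b k, a k) = q}. w k) * exp (x * snd q + x\<^sup>2 * fst q))"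
    by (auto simp: sum_distrib_right intro!: sum.cong)
  finally show ?thesis .
qed

lemma exp_quadratic_sum_eq_imp_match:
  fixes K :: "'k set" and K' :: "'m set"
    and w a b :: "'k \<Rightarrow> real" and w' a' b' :: "'m \<Rightarrow> real"
  assumes "finite K" "finite K'" "\<And>i. i \<in> K \<Longrightarrow> 0 < w i"
    and "\<And>x. (\<Sum>i\<in>K'. w' i * exp (x * a' i + x\<^sup>2 * b' i)) = (\<Sum>i\<in>K. w i * exp (x * a i + x\<^sup>2 * b i))"
    and "k \<in> K"
  shows "\<exists>k'\<in>K'. a' k' = a k \<and> b' k' = b k"
proof (rule ccontr)
  assume no_match: "\<not> ?thesis"
  define S where "S = (\<lambda>i. (b' i, a' i)) ` K' \<union> (\<lambda>i. (b i, a i)) ` K"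
  define c where "c q = (\<Sum>i\<in>{i\<in>K'. (b' i, a' i) = q}. w' i) - (\<Sum>i\<in>{i\<in>K. (b i, a i) = q}. w i)" for q
  have "finite S" using assms(1,2) by (simp add: S_def)
  have "\<forall>q\<in>S. c q = 0"
  proof (rule exp_quadratic_linear_independent[OF \<open>finite S\<close>])
    show "(\<Sum>q\<in>S. c q * exp (x * snd q + x\<^sup>2 * fst q)) = 0" for x
      using assms(4)[of x] \<open>finite S\<close> assms(1,2)
        sum_exp_quadratic_group[of K' S b' a' w' x] sum_exp_quadratic_group[of K S b a w x]
      by (simp add: c_def S_def left_diff_distrib sum_subtractf)
  qed
  then have "c (b k, a k) = 0" using assms(5) by (simp add: S_def)
  moreover have "{i\<in>K'. b' i = b k \<and> a' i = a k} = {}" using no_match by auto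
  ultimately have "(\<Sum>i\<in>{i\<in>K. b i = b k \<and> a i = a k}. w i) = 0" by (simp add: c_def)
  moreover have "w k \<le> (\<Sum>i\<in>{i\<in>K. b i = b k \<and> a i = a k}. w i)"
    using assms(1,3,5) by (intro member_le_sum) (auto intro: less_imp_le)
  ultimately show False using assms(3,5) by fastforce
qed

section \<open>Covariance matrices of structural parameters\<close>

lemma psd2_add_rank_one:
  fixes s v w e \<theta> :: real
  assumes "0 \<le> s" "0 \<le> v" "w\<^sup>2 \<le> s * v" "0 \<le> e"
  shows "(w - \<theta> * e)\<^sup>2 \<le> (s + \<theta>\<^sup>2 * e) * (v + e)"
proof -
  have var_nonneg: "0 \<le> s + 2 * \<theta> * w + \<theta>\<^sup>2 * v"
  proof (cases "s = 0")
    case True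
    then show ?thesis using assms(2,3) by simp
  next
    case False
    have "s * (s + 2 * \<theta> * w + \<theta>\<^sup>2 * v) = (s + \<theta> * w)\<^sup>2 + \<theta>\<^sup>2 * (s * v - w\<^sup>2)"
      by (simp add: power2_eq_square algebra_simps)
    also have "\<dots> \<ge> 0" using assms(3) by simp
    finally show ?thesis using False assms(1) by (simp add: zero_le_mult_iff)
  qed
  moreover have "(s + \<theta>\<^sup>2 * e) * (v + e) - (w - \<theta> * e)\<^sup>2
      = (s * v - w\<^sup>2) + e * (s + 2 * \<theta> * w + \<theta>\<^sup>2 * v)"
    by (simp add: power2_eq_square algebra_simps)
  moreover have "0 \<le> (s * v - w\<^sup>2) + e * (s + 2 * \<theta> * w + \<theta>\<^sup>2 * v)"
    using var_nonneg assms(3,4) by simp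
  ultimately show ?thesis by linarith
qed

lemma valid_param_cov_psd:
  assumes "valid_param J L P" "j < J" "l < L"
  shows "0 \<le> sigU2 \<theta> P j l" "0 \<le> sigV2 \<theta> P j l"
    "(sigUV \<theta> P j l)\<^sup>2 \<le> sigU2 \<theta> P j l * sigV2 \<theta> P j l"
  using assms psd2_add_rank_one[of "sU2 P" "sV2 P j" "sUV P j" "se2 P l" \<theta>]
  unfolding valid_param_def sigU2_def sigV2_def sigUV_def by auto

text \<open>Since U + \<theta>V = U* + \<theta>V*, its variance and its covariance with U do not involve
  the noise \<epsilon>; neither does the second term in the definition of lowU.\<close>
lemma var_U_add_theta_V:
  "sigV2 \<theta> P j l * \<theta>\<^sup>2 + 2 * sigUV \<theta> P j l * \<theta> + sigU2 \<theta> P j l = sV2 P j * \<theta>\<^sup>2 + 2 * sUV P j * \<theta> + sU2 P"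
  unfolding sigU2_def sigV2_def sigUV_def by (simp add: power2_eq_square algebra_simps)

lemma cov_U_U_add_theta_V: "\<theta> * sigUV \<theta> P j l + sigU2 \<theta> P j l = \<theta> * sUV P j + sU2 P"
  unfolding sigU2_def sigUV_def by (simp add: power2_eq_square algebra_simps)

lemma sigU2_diff_theta_sigV2: "sigU2 \<theta> P j l - \<theta>\<^sup>2 * sigV2 \<theta> P j l = sU2 P - \<theta>\<^sup>2 * sV2 P j"
  unfolding sigU2_def sigV2_def by (simp add: algebra_simps)

lemma lowU_eq:
  "lowU \<theta> P j l = max ((\<theta> * sUV P j + sU2 P)\<^sup>2 / (sV2 P j * \<theta>\<^sup>2 + 2 * sUV P j * \<theta> + sU2 P))
                       (sU2 P - \<theta>\<^sup>2 * sV2 P j)"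
  unfolding lowU_def var_U_add_theta_V cov_U_U_add_theta_V sigU2_diff_theta_sigV2 ..

lemma square_div_le_iff:
  fixes s v w \<theta> :: real
  assumes "0 < v * \<theta>\<^sup>2 + 2 * w * \<theta> + s"
  shows "(\<theta> * w + s)\<^sup>2 / (v * \<theta>\<^sup>2 + 2 * w * \<theta> + s) \<le> s \<longleftrightarrow> 0 \<le> \<theta>\<^sup>2 * (s * v - w\<^sup>2)"
proof -
  have "s * (v * \<theta>\<^sup>2 + 2 * w * \<theta> + s) - (\<theta> * w + s)\<^sup>2 = \<theta>\<^sup>2 * (s * v - w\<^sup>2)"
    by (simp add: power2_eq_square algebra_simps)
  moreover have "(\<theta> * w + s)\<^sup>2 / (v * \<theta>\<^sup>2 + 2 * w * \<theta> + s) \<le> s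
      \<longleftrightarrow> (\<theta> * w + s)\<^sup>2 \<le> s * (v * \<theta>\<^sup>2 + 2 * w * \<theta> + s)"
    using assms by (simp add: divide_le_eq mult.commute)
  ultimately show ?thesis by linarith
qed

lemma lowU_le_sU2_iff:
  assumes "0 < sV2 P j * \<theta>\<^sup>2 + 2 * sUV P j * \<theta> + sU2 P"
  shows "lowU \<theta> P j l \<le> sU2 P \<longleftrightarrow> 0 \<le> \<theta>\<^sup>2 * (sU2 P * sV2 P j - (sUV P j)\<^sup>2) \<and> 0 \<le> \<theta>\<^sup>2 * sV2 P j"
  unfolding lowU_eq using square_div_le_iff[OF assms] by simp

lemma lowU_nonneg:
  assumes "0 < sV2 P j * \<theta>\<^sup>2 + 2 * sUV P j * \<theta> + sU2 P"
  shows "0 \<le> lowU \<theta> P j l"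
  unfolding lowU_eq using assms by (simp add: max.coboundedI1)

lemma pos_def2_imp_var_pos:
  assumes "pos_def2 (sigU2 \<theta> P j l) (sigUV \<theta> P j l) (sigV2 \<theta> P j l)"
  shows "0 < sV2 P j * \<theta>\<^sup>2 + 2 * sUV P j * \<theta> + sU2 P"
proof -
  have "0 < sigU2 \<theta> P j l * 1\<^sup>2 + 2 * sigUV \<theta> P j l * 1 * \<theta> + sigV2 \<theta> P j l * \<theta>\<^sup>2"
    using assms unfolding pos_def2_def by (simp only: prod.inject one_neq_zero simp_thms)
  then show ?thesis using var_U_add_theta_V[of \<theta> P j l] by simp
qed

lemma sU2_mem_interval:
  assumes "valid_param J L P" "j < J" "l < L" "0 < sV2 P j * \<theta>\<^sup>2 + 2 * sUV P j * \<theta> + sU2 P"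
  shows "sU2 P \<in> {lowU \<theta> P j l .. sigU2 \<theta> P j l}"
  using assms(1-3) lowU_le_sU2_iff[OF assms(4)] unfolding valid_param_def sigU2_def
  by (auto simp: mult_nonneg_nonneg)

lemma sU2_mem_interval_imp:
  assumes "\<theta> \<noteq> 0" "0 < sV2 P j * \<theta>\<^sup>2 + 2 * sUV P j * \<theta> + sU2 P"
    and "sU2 P \<in> {lowU \<theta> P j l .. sigU2 \<theta> P j l}"
  shows "0 \<le> sU2 P" "0 \<le> sV2 P j" "(sUV P j)\<^sup>2 \<le> sU2 P * sV2 P j" "0 \<le> se2 P l"
  using assms lowU_nonneg[OF assms(2), of l] lowU_le_sU2_iff[OF assms(2), of l]
  unfolding sigU2_def by (auto simp: zero_le_mult_iff)

section \<open>Structural parameters as Gaussian mixtures\<close>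

text \<open>The variance of U + y V for the covariance triple (Var U, Cov (U, V), Var V).\<close>
fun quad_form :: "real \<times> real \<times> real \<Rightarrow> real \<Rightarrow> real" where
  "quad_form (a, b, c) y = a + 2 * b * y + c * y\<^sup>2"

lemma finite_quad_form_eq:
  assumes "t \<noteq> t'"
  shows "finite {y. quad_form t y = quad_form t' y}"
proof -
  obtain a b c a' b' c' where t: "t = (a, b, c)" "t' = (a', b', c')" by (cases t, cases t')
  define p where "p = [:a - a', 2 * (b - b'), c - c':]"
  have "p \<noteq> 0" using assms unfolding p_def t by auto
  moreover have "{y. quad_form t y = quad_form t' y} = {y. poly p y = 0}"
    unfolding p_def t by (auto simp: power2_eq_square algebra_simps)
  ultimately show ?thesis by (simp add: poly_roots_finite)
qed

lemma ex_inj_on_quad_form: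
  assumes "finite A"
  shows "\<exists>y. inj_on (\<lambda>t. quad_form t y) A"
proof -
  define Z where "Z = (\<Union>t\<in>A. \<Union>t'\<in>A - {t}. {y. quad_form t y = quad_form t' y})"
  have "finite Z" unfolding Z_def using assms by (auto intro!: finite_quad_form_eq simp del: quad_form.simps)
  then obtain y where "y \<notin> Z" using ex_new_if_finite[OF infinite_UNIV_char_0] by blast
  have "inj_on (\<lambda>t. quad_form t y) A"
  proof (rule inj_onI, rule ccontr)
    fix t t' assume "t \<in> A" "t' \<in> A" "quad_form t y = quad_form t' y" "t \<noteq> t'"
    then have "y \<in> Z" unfolding Z_def by (auto simp del: quad_form.simps)
    with \<open>y \<notin> Z\<close> show False by simp
  qed
  then show ?thesis ..
qed

definition component_law :: "real \<Rightarrow> sparam \<Rightarrow> nat \<times> nat \<Rightarrow> (real \<times> real) measure" where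
  "component_law \<theta> P k = bvn (- \<theta> * mue P (snd k)) (muV P (fst k) + mue P (snd k))
     (sigU2 \<theta> P (fst k) (snd k)) (sigUV \<theta> P (fst k) (snd k)) (sigV2 \<theta> P (fst k) (snd k))"

definition weight :: "sparam \<Rightarrow> nat \<times> nat \<Rightarrow> real" where
  "weight P k = pV P (fst k) * pe P (snd k)"

definition cov_triple :: "real \<Rightarrow> sparam \<Rightarrow> nat \<times> nat \<Rightarrow> real \<times> real \<times> real" where
  "cov_triple \<theta> P k = (sigU2 \<theta> P (fst k) (snd k), sigUV \<theta> P (fst k) (snd k), sigV2 \<theta> P (fst k) (snd k))"

lemma weight_pos: "valid_param J L P \<Longrightarrow> k \<in> {..<J} \<times> {..<L} \<Longrightarrow> 0 < weight P k"
  unfolding valid_param_def weight_def by auto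

lemma ennreal_induced_prob:
  assumes "valid_param J L P"
  shows "ennreal (induced_prob \<theta> J L P A)
       = (\<Sum>k\<in>{..<J} \<times> {..<L}. ennreal (weight P k) * emeasure (component_law \<theta> P k) A)"
proof -
  have "induced_prob \<theta> J L P A = (\<Sum>k\<in>{..<J} \<times> {..<L}. weight P k * measure (component_law \<theta> P k) A)"
    unfolding induced_prob_def sum.cartesian_product weight_def component_law_def by (simp add: case_prod_beta)
  also have "ennreal \<dots> = (\<Sum>k\<in>{..<J} \<times> {..<L}. ennreal (weight P k) * emeasure (component_law \<theta> P k) A)"
    using weight_pos[OF assms, THEN less_imp_le]
    by (subst sum_ennreal[symmetric])
       (auto simp: ennreal_mult component_law_def finite_measure.emeasure_eq_measure[OF prob_space.finite_measure[OF prob_space_bvn]]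
             intro!: sum.cong)
  finally show ?thesis .
qed

definition mean_along :: "real \<Rightarrow> sparam \<Rightarrow> real \<Rightarrow> nat \<times> nat \<Rightarrow> real" where
  "mean_along \<theta> P y k = - \<theta> * mue P (snd k) + y * (muV P (fst k) + mue P (snd k))"

definition laplace_along :: "real \<Rightarrow> nat \<Rightarrow> nat \<Rightarrow> sparam \<Rightarrow> real \<Rightarrow> real \<Rightarrow> real" where
  "laplace_along \<theta> J L P y x = (\<Sum>k\<in>{..<J} \<times> {..<L}.
     weight P k * exp (x * mean_along \<theta> P y k + x\<^sup>2 * (quad_form (cov_triple \<theta> P k) y / 2)))"

lemma mixture_laplace_transform:
  assumes "valid_param J L P"
  shows "mixture_nn_integral ({..<J} \<times> {..<L}) (\<lambda>k. ennreal (weight P k)) (component_law \<theta> P)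
           (\<lambda>z. ennreal (exp (x * fst z + (x * y) * snd z)))
       = ennreal (laplace_along \<theta> J L P y x)"
proof -
  have "(\<integral>\<^sup>+z. ennreal (exp (x * fst z + (x * y) * snd z)) \<partial>component_law \<theta> P k)
      = ennreal (exp (x * mean_along \<theta> P y k + x\<^sup>2 * (quad_form (cov_triple \<theta> P k) y / 2)))"
    if "k \<in> {..<J} \<times> {..<L}" for k
  proof -
    have psd: "0 \<le> sigU2 \<theta> P (fst k) (snd k)" "0 \<le> sigV2 \<theta> P (fst k) (snd k)"
      "(sigUV \<theta> P (fst k) (snd k))\<^sup>2 \<le> sigU2 \<theta> P (fst k) (snd k) * sigV2 \<theta> P (fst k) (snd k)"
      using valid_param_cov_psd[OF assms] that by auto
    show ?thesis
      unfolding component_law_def nn_integral_exp_bvn[OF psd]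
      by (simp add: mean_along_def cov_triple_def power2_eq_square algebra_simps add_divide_distrib)
  qed
  then show ?thesis
    unfolding mixture_nn_integral_def laplace_along_def using weight_pos[OF assms, THEN less_imp_le]
    by (subst sum_ennreal[symmetric]) (auto simp: ennreal_mult intro!: sum.cong)
qed

lemma same_dist_imp_laplace_along_eq:
  assumes P0: "valid_param J L P0" and P: "valid_param J' L' P"
    and same: "same_dist \<theta> J' L' P J L P0"
  shows "laplace_along \<theta> J' L' P y x = laplace_along \<theta> J L P0 y x"
proof -
  have "mixture_nn_integral ({..<J'} \<times> {..<L'}) (\<lambda>k. ennreal (weight P k)) (component_law \<theta> P)
          (\<lambda>z. ennreal (exp (x * fst z + (x * y) * snd z)))
      = mixture_nn_integral ({..<J} \<times> {..<L}) (\<lambda>k. ennreal (weight P0 k)) (component_law \<theta> P0)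
          (\<lambda>z. ennreal (exp (x * fst z + (x * y) * snd z)))"
  proof (rule mixture_nn_integral_eq[where M = borel])
    show "(\<lambda>z. ennreal (exp (x * fst z + (x * y) * snd z))) \<in> borel_measurable borel"
      by (intro measurable_compose[OF _ measurable_ennreal] borel_measurable_continuous_onI continuous_intros)
    fix A :: "(real \<times> real) set" assume "A \<in> sets borel"
    then have "ennreal (induced_prob \<theta> J' L' P A) = ennreal (induced_prob \<theta> J L P0 A)"
      using same by (simp add: same_dist_def)
    then show "(\<Sum>k\<in>{..<J'} \<times> {..<L'}. ennreal (weight P k) * emeasure (component_law \<theta> P k) A)
        = (\<Sum>k\<in>{..<J} \<times> {..<L}. ennreal (weight P0 k) * emeasure (component_law \<theta> P0 k) A)"
      unfolding ennreal_induced_prob[OF P] ennreal_induced_prob[OF P0] .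
  qed (simp_all add: component_law_def)
  then have "ennreal (laplace_along \<theta> J' L' P y x) = ennreal (laplace_along \<theta> J L P0 y x)"
    unfolding mixture_laplace_transform[OF P] mixture_laplace_transform[OF P0] .
  moreover have "0 \<le> laplace_along \<theta> J' L' P y x" "0 \<le> laplace_along \<theta> J L P0 y x"
    using weight_pos[OF P, THEN less_imp_le] weight_pos[OF P0, THEN less_imp_le]
    unfolding laplace_along_def by (auto intro!: sum_nonneg)
  ultimately show ?thesis by simp
qed

text \<open>For a y at which the variances of U + y V separate the finitely many covariance
  triples, matching the Laplace transforms along (x, x y) recovers the whole triple.\<close>
lemma same_dist_imp_cov_triple_match:
  assumes P0: "valid_param J L P0" and P: "valid_param J' L' P"
    and same: "same_dist \<theta> J' L' P J L P0" and k0: "k0 \<in> {..<J} \<times> {..<L}"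
  shows "\<exists>k1\<in>{..<J'} \<times> {..<L'}. cov_triple \<theta> P k1 = cov_triple \<theta> P0 k0"
proof -
  define K0 where "K0 = {..<J} \<times> {..<L}"
  define K1 where "K1 = {..<J'} \<times> {..<L'}"
  have fin: "finite K0" "finite K1" by (simp_all add: K0_def K1_def)
  have "finite (cov_triple \<theta> P0 ` K0 \<union> cov_triple \<theta> P ` K1)" using fin by simp
  then obtain y where y: "inj_on (\<lambda>t. quad_form t y) (cov_triple \<theta> P0 ` K0 \<union> cov_triple \<theta> P ` K1)"
    using ex_inj_on_quad_form by blast
  obtain k1 where k1: "k1 \<in> K1"
    "quad_form (cov_triple \<theta> P k1) y / 2 = quad_form (cov_triple \<theta> P0 k0) y / 2"
    using exp_quadratic_sum_eq_imp_match[OF fin, where w = "weight P0" and w' = "weight P"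
        and a = "mean_along \<theta> P0 y" and a' = "mean_along \<theta> P y"
        and b = "\<lambda>k. quad_form (cov_triple \<theta> P0 k) y / 2"
        and b' = "\<lambda>k. quad_form (cov_triple \<theta> P k) y / 2" and k = k0]
      same_dist_imp_laplace_along_eq[OF P0 P same] weight_pos[OF P0] k0
    unfolding K0_def K1_def laplace_along_def by auto
  have "cov_triple \<theta> P k1 = cov_triple \<theta> P0 k0"
    by (rule inj_onD[OF y]) (use k1 k0 in \<open>auto simp: K0_def simp del: quad_form.simps\<close>)
  then show ?thesis using k1(1) unfolding K1_def by blast
qed

section \<open>The identified set\<close>

lemma same_dist_imp_sU2_mem_ident_set:
  assumes P0: "valid_param J L P0"
    and pd: "\<forall>j<J. \<forall>l<L. pos_def2 (sigU2 \<theta> P0 j l) (sigUV \<theta> P0 j l) (sigV2 \<theta> P0 j l)"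
    and P: "valid_param J' L' P" and same: "same_dist \<theta> J' L' P J L P0"
  shows "sU2 P \<in> ident_set \<theta> J L P0"
  unfolding ident_set_def
proof (intro InterI, clarify)
  fix j l assume jl: "j < J" "l < L"
  obtain j' l' where jl': "j' < J'" "l' < L'" and
    cov: "sigU2 \<theta> P j' l' = sigU2 \<theta> P0 j l" "sigUV \<theta> P j' l' = sigUV \<theta> P0 j l"
      "sigV2 \<theta> P j' l' = sigV2 \<theta> P0 j l"
    using same_dist_imp_cov_triple_match[OF P0 P same, of "(j, l)"] jl by (auto simp: cov_triple_def)
  have "pos_def2 (sigU2 \<theta> P j' l') (sigUV \<theta> P j' l') (sigV2 \<theta> P j' l')"
    using pd jl cov by simp
  then have "sU2 P \<in> {lowU \<theta> P j' l' .. sigU2 \<theta> P j' l'}"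
    by (intro sU2_mem_interval[OF P jl'] pos_def2_imp_var_pos)
  then show "sU2 P \<in> {lowU \<theta> P0 j l .. sigU2 \<theta> P0 j l}"
    using cov unfolding lowU_def by simp
qed

text \<open>The witness moves the amount d of variance from U* into the noise \<epsilon>, which leaves
  every covariance matrix of the mixture unchanged.\<close>
lemma mem_ident_set_imp_ex_param:
  assumes P0: "valid_param J L P0"
    and pd: "\<forall>j<J. \<forall>l<L. pos_def2 (sigU2 \<theta> P0 j l) (sigUV \<theta> P0 j l) (sigV2 \<theta> P0 j l)"
    and s: "s \<in> ident_set \<theta> J L P0"
  shows "\<exists>P. valid_param J L P \<and> sU2 P = s
            \<and> (\<forall>j<J. pV P j = pV P0 j \<and> muV P j = muV P0 j)
            \<and> (\<forall>l<L. pe P l = pe P0 l \<and> mue P l = mue P0 l)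
            \<and> same_dist \<theta> J L P J L P0"
proof (cases "\<theta> = 0")
  case True
  have "0 < J" "0 < L" using P0 by (simp_all add: valid_param_def)
  then have "s \<in> {lowU \<theta> P0 0 0 .. sigU2 \<theta> P0 0 0}" using s by (simp add: ident_set_def)
  then have "s = sU2 P0" using True by (simp add: lowU_eq sigU2_def)
  then show ?thesis using P0 by (auto simp: same_dist_def)
next
  case False
  define d where "d = (sU2 P0 - s) / \<theta>\<^sup>2"
  define P where "P = P0\<lparr>sU2 := s, sV2 := \<lambda>j. sV2 P0 j - d, sUV := \<lambda>j. sUV P0 j + \<theta> * d,
                         se2 := \<lambda>l. se2 P0 l + d\<rparr>"
  have "\<theta>\<^sup>2 * d = sU2 P0 - s" using False by (simp add: d_def)
  then have cov: "sigU2 \<theta> P j l = sigU2 \<theta> P0 j l" "sigUV \<theta> P j l = sigUV \<theta> P0 j l"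
      "sigV2 \<theta> P j l = sigV2 \<theta> P0 j l" for j l
    unfolding P_def sigU2_def sigUV_def sigV2_def by (simp_all add: algebra_simps)
  have "0 \<le> sU2 P \<and> 0 \<le> sV2 P j \<and> (sUV P j)\<^sup>2 \<le> sU2 P * sV2 P j \<and> 0 \<le> se2 P l"
    if "j < J" "l < L" for j l
  proof -
    have var_pos: "0 < sV2 P j * \<theta>\<^sup>2 + 2 * sUV P j * \<theta> + sU2 P"
      using pd that by (intro pos_def2_imp_var_pos[of \<theta> P j l]) (simp add: cov)
    have "sU2 P \<in> {lowU \<theta> P j l .. sigU2 \<theta> P j l}"
      using s that cov unfolding ident_set_def lowU_def by (simp add: P_def)
    then show ?thesis using sU2_mem_interval_imp[OF False var_pos] by blast
  qed
  then have "valid_param J L P"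
    using P0 unfolding valid_param_def by (auto simp: P_def)
  moreover have "same_dist \<theta> J L P J L P0"
    unfolding same_dist_def induced_prob_def cov by (simp add: P_def)
  ultimately show ?thesis by (auto simp: P_def)
qed

theorem proposition3:
  fixes \<theta> :: real and J L :: nat and P0 :: sparam
  assumes "valid_param J L P0"
    and "\<forall>j<J. \<forall>l<L. pos_def2 (sigU2 \<theta> P0 j l) (sigUV \<theta> P0 j l) (sigV2 \<theta> P0 j l)"
  shows "(\<forall>J' L' P. valid_param J' L' P \<and> same_dist \<theta> J' L' P J L P0
            \<longrightarrow> sU2 P \<in> ident_set \<theta> J L P0)
       \<and> (\<forall>s \<in> ident_set \<theta> J L P0. \<exists>P. valid_param J L P \<and> sU2 P = s
            \<and> (\<forall>j<J. pV P j = pV P0 j \<and> muV P j = muV P0 j)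
            \<and> (\<forall>l<L. pe P l = pe P0 l \<and> mue P l = mue P0 l)
            \<and> same_dist \<theta> J L P J L P0)"
  using same_dist_imp_sU2_mem_ident_set[OF assms] mem_ident_set_imp_ex_param[OF assms] by blast

end
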